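(* Let $\delta=(\mathbf a_1,\mathbf a_2,\mathbf a_3)$ be a nondegenerate, positively oriented m-triangle in the $xy$-plane with normal $\mathbf a_1\times\mathbf a_2/|\mathbf a_1\times\mathbf a_2|=\mathbf k$, whose shape $\delta^\ast$ is not the north pole. Let $\{\mathbf u_1,\mathbf u_2\}$ be an eigenframe of the inertia tensor $B_\delta$ in the plane, with $\mathbf u_1$ the eigenvector for the smallest eigenvalue $\lambda_1$, and let $\psi_i$ be the oriented angle from $\mathbf a_1$ to $\mathbf u_i$. Then $$\tan\frac\theta2=-\frac{1+\sin\varphi}{\cos\varphi}\tan\psi_1=\frac{1+\sin\varphi}{\cos\varphi}\cot\psi_2,$$ where $(\varphi,\theta)$ are the spherical coordinates of $\delta^\ast$ on the shape sphere: $\varphi$ the colatitude and $\theta$ the longitude (eastward, with $\theta=0$ at the binary collision shape $\mathfrak b_{23}$).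
   Context: Masses $m_1,m_2,m_3>0$, $m_1+m_2+m_3=1$; m-triangle $(\mathbf a_1,\mathbf a_2,\mathbf a_3)$ with $\sum m_i\mathbf a_i=0$. Inertia tensor $B_\delta(\mathbf u,\mathbf v)=\sum m_j(\mathbf u\times\mathbf a_j)\cdot(\mathbf v\times\mathbf a_j)$. The shape sphere $M^\ast$ (oriented m-triangles with $\sum m_i|\mathbf a_i|^2=1$ modulo rotation, with the kinematic metric $\frac14(d\varphi^2+\sin^2\varphi\,d\theta^2)$) has its equator consisting of collinear shapes and its north pole equal to the shape of the positively oriented m-triangle with $m_j|\mathbf a_j|^2=(1-m_j)/2$; the northern hemisphere consists of positively oriented shapes. $\mathfrak b_{ij}$ is the binary collision shape $\mathbf a_i=\mathbf a_j$ on the equator. The eastward direction of increasing longitude is the positive direction of the equator induced by the orientation of the northern hemisphere, in which $\mathfrak b_{23},\mathfrak b_{31},\mathfrak b_{12}$ appear in positive cyclic order. *)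

theory Defs
  imports "HOL-Analysis.Analysis"
begin

definition kvec :: "real^3" where "kvec = vector [0, 0, 1]"

definition inertia :: "real \<Rightarrow> real \<Rightarrow> real \<Rightarrow> real^3 \<Rightarrow> real^3 \<Rightarrow> real^3
    \<Rightarrow> real^3 \<Rightarrow> real^3 \<Rightarrow> real" where
  "inertia m1 m2 m3 a1 a2 a3 u v =
     m1 * ((cross3 u a1) \<bullet> (cross3 v a1)) + m2 * ((cross3 u a2) \<bullet> (cross3 v a2))
   + m3 * ((cross3 u a3) \<bullet> (cross3 v a3))"

definition moment :: "real \<Rightarrow> real \<Rightarrow> real \<Rightarrow> real^3 \<Rightarrow> real^3 \<Rightarrow> real^3 \<Rightarrow> real" where
  "moment m1 m2 m3 a1 a2 a3 = m1 * (norm a1)^2 + m2 * (norm a2)^2 + m3 * (norm a3)^2"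

definition cplx :: "real^3 \<Rightarrow> complex" where
  "cplx a = Complex (a $ 1) (a $ 2)"

definition jac1 :: "real \<Rightarrow> real \<Rightarrow> real \<Rightarrow> real^3 \<Rightarrow> real^3 \<Rightarrow> real^3 \<Rightarrow> complex" where
  "jac1 m1 m2 m3 a1 a2 a3 = complex_of_real (sqrt (m2 * m3 / (1 - m1))) * (cplx a2 - cplx a3)"

definition jac2 :: "real \<Rightarrow> real \<Rightarrow> real \<Rightarrow> real^3 \<Rightarrow> real^3 \<Rightarrow> real^3 \<Rightarrow> complex" where
  "jac2 m1 m2 m3 a1 a2 a3 = complex_of_real (sqrt (m1 / (1 - m1))) * cplx a1"

text \<open>The shape of a planar m-triangle as a point of the unit sphere in R^3 (Hopf map
  in Jacobi coordinates).  Third axis: north pole (positively oriented shape with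
  m_j |a_j|^2 = (1 - m_j)/2 after normalisation); equator: collinear shapes;
  first axis: binary collision b23 (longitude 0); longitude increasing so that
  b23, b31, b12 are in positive cyclic order.\<close>
definition shape_point :: "real \<Rightarrow> real \<Rightarrow> real \<Rightarrow> real^3 \<Rightarrow> real^3 \<Rightarrow> real^3 \<Rightarrow> real^3" where
  "shape_point m1 m2 m3 a1 a2 a3 =
     (let w1 = jac1 m1 m2 m3 a1 a2 a3; w2 = jac2 m1 m2 m3 a1 a2 a3;
          I = moment m1 m2 m3 a1 a2 a3
      in vector [((cmod w2)^2 - (cmod w1)^2) / I,
                 - 2 * Re (w1 * cnj w2) / I,
                 2 * Im (w1 * cnj w2) / I])"

definition shape_coords :: "real \<Rightarrow> real \<Rightarrow> real \<Rightarrow> real^3 \<Rightarrow> real^3 \<Rightarrow> real^3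
    \<Rightarrow> real \<Rightarrow> real \<Rightarrow> bool" where
  "shape_coords m1 m2 m3 a1 a2 a3 \<phi> \<theta> \<longleftrightarrow>
     0 \<le> \<phi> \<and> \<phi> \<le> pi \<and>
     shape_point m1 m2 m3 a1 a2 a3 = vector [sin \<phi> * cos \<theta>, sin \<phi> * sin \<theta>, cos \<phi>]"

definition inertia_eigen :: "real \<Rightarrow> real \<Rightarrow> real \<Rightarrow> real^3 \<Rightarrow> real^3 \<Rightarrow> real^3
    \<Rightarrow> real \<Rightarrow> real^3 \<Rightarrow> bool" where
  "inertia_eigen m1 m2 m3 a1 a2 a3 lam u \<longleftrightarrow>
     u \<noteq> 0 \<and> (\<forall>v. inertia m1 m2 m3 a1 a2 a3 u v = lam * (u \<bullet> v))"

definition oriented_angle :: "real^3 \<Rightarrow> real^3 \<Rightarrow> real^3 \<Rightarrow> real \<Rightarrow> bool" where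
  "oriented_angle n a u \<psi> \<longleftrightarrow>
     cos \<psi> = (a \<bullet> u) / (norm a * norm u) \<and>
     sin \<psi> = ((cross3 a u) \<bullet> n) / (norm a * norm u)"

end

theory Submission
  imports Defs
begin

text \<open>
  Identify the plane with the complex numbers and pass to the mass-weighted Jacobi coordinates
  \<open>w1 = \<alpha> (z2 - z3)\<close>, \<open>w2 = \<gamma> z1\<close> of the centred configuration.  Then the quadratic moment
  \<open>Q = m1 z1\<^sup>2 + m2 z2\<^sup>2 + m3 z3\<^sup>2\<close> equals \<open>w1\<^sup>2 + w2\<^sup>2\<close>, the moment of inertia is
  \<open>I = |w1|\<^sup>2 + |w2|\<^sup>2\<close>, and the shape is the inverse stereographic image of
  \<open>\<omega> = w1 / w2\<close> (\<open>\<omega> = 0\<close> is the collision b23, \<open>\<omega> = \<i>\<close> the north pole).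
  On planar vectors the eigenvalue equation of the inertia tensor reads
  \<open>Q cnj \<zeta> = (I - 2 \<lambda>) \<zeta>\<close>, so the eigenvalues are \<open>(I - |Q|) / 2\<close> and \<open>(I + |Q|) / 2\<close>,
  and the axis of the smallest one satisfies \<open>\<zeta>\<^sup>2 = Q / |Q|\<close>.  Since \<open>a1\<close> is parallel to \<open>w2\<close>,
  the doubled angle \<open>2 \<psi>1\<close> is the argument of \<open>Q / w2\<^sup>2 = 1 + \<omega>\<^sup>2\<close>, and the claim becomes an
  identity between half-angle tangents expressed in \<open>\<omega>\<close>.  The second axis is perpendicular to
  the first, whence \<open>cot \<psi>2 = - tan \<psi>1\<close>.
\<close>

section \<open>Planar vectors as complex numbers\<close>

lemma cplx_add [simp]: "cplx (a + b) = cplx a + cplx b"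
  by (simp add: cplx_def complex_eq_iff)

lemma cplx_scaleR [simp]: "cplx (c *\<^sub>R a) = of_real c * cplx a"
  by (simp add: cplx_def complex_eq_iff)

lemma cplx_zero [simp]: "cplx 0 = 0"
  by (simp add: cplx_def complex_eq_iff)

lemma cplx_centered:
  "m1 *\<^sub>R a1 + m2 *\<^sub>R a2 + m3 *\<^sub>R a3 = 0 \<Longrightarrow> m1 * cplx a1 + m2 * cplx a2 + m3 * cplx a3 = 0"
  by (metis cplx_add cplx_scaleR cplx_zero)

lemma inner_planar: "u $ 3 = 0 \<Longrightarrow> a \<bullet> u = Re (cnj (cplx a) * cplx u)"
  by (simp add: cplx_def inner_vec_def sum_3)

lemma norm_planar: "a $ 3 = 0 \<Longrightarrow> norm a = cmod (cplx a)"
  by (simp add: norm_eq_sqrt_inner cmod_def inner_planar cplx_def inner_complex_def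
      power2_eq_square)

lemma cross3_kvec: "cross3 a b \<bullet> kvec = Im (cnj (cplx a) * cplx b)"
  by (simp add: kvec_def cplx_def inner_vec_def sum_3 cross_components)

lemma positively_oriented_planar:
  assumes "cross3 a b \<noteq> 0" and "(1 / norm (cross3 a b)) *\<^sub>R cross3 a b = kvec"
  shows "Im (cnj (cplx a) * cplx b) > 0"
proof -
  have "(1 / norm (cross3 a b)) * (cross3 a b \<bullet> kvec) = kvec \<bullet> kvec"
    using arg_cong[OF assms(2), of "\<lambda>v. v \<bullet> kvec"] by simp
  then have "cross3 a b \<bullet> kvec = norm (cross3 a b)"
    using assms(1) by (simp add: kvec_def inner_vec_def sum_3 field_simps)
  then show ?thesis
    using assms(1) by (simp add: cross3_kvec)
qed

lemma oriented_angle_planar: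
  assumes "a $ 3 = 0" "u $ 3 = 0" "a \<noteq> 0" "norm u = 1" "oriented_angle kvec a u \<psi>"
  shows "cis \<psi> = cnj (cplx a) * cplx u / cmod (cplx a)"
  using assms by (simp add: oriented_angle_def complex_eq_iff inner_planar norm_planar cross3_kvec)

lemma moment_planar:
  assumes "a1 $ 3 = 0" "a2 $ 3 = 0" "a3 $ 3 = 0"
  shows "moment m1 m2 m3 a1 a2 a3 =
           m1 * (cmod (cplx a1))\<^sup>2 + m2 * (cmod (cplx a2))\<^sup>2 + m3 * (cmod (cplx a3))\<^sup>2"
  using assms by (simp add: moment_def norm_planar)

section \<open>Principal axes of the planar inertia tensor\<close>

definition quadratic_moment :: "real \<Rightarrow> real \<Rightarrow> real \<Rightarrow> real^3 \<Rightarrow> real^3 \<Rightarrow> real^3 \<Rightarrow> complex" where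
  "quadratic_moment m1 m2 m3 a1 a2 a3 = m1 * (cplx a1)\<^sup>2 + m2 * (cplx a2)\<^sup>2 + m3 * (cplx a3)\<^sup>2"

lemma inertia_eq:
  "inertia m1 m2 m3 a1 a2 a3 u v = moment m1 m2 m3 a1 a2 a3 * (u \<bullet> v)
     - (m1 * (a1 \<bullet> u) * (a1 \<bullet> v) + m2 * (a2 \<bullet> u) * (a2 \<bullet> v) + m3 * (a3 \<bullet> u) * (a3 \<bullet> v))"
  by (simp add: inertia_def moment_def dot_cross power2_norm_eq_inner algebra_simps inner_commute)

lemma inertia_eigen_planar:
  assumes planar: "a1 $ 3 = 0" "a2 $ 3 = 0" "a3 $ 3 = 0" "u $ 3 = 0"
    and eigen: "inertia_eigen m1 m2 m3 a1 a2 a3 lam u"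
  shows "quadratic_moment m1 m2 m3 a1 a2 a3 * cnj (cplx u)
           = (moment m1 m2 m3 a1 a2 a3 - 2 * lam) * cplx u"
proof -
  define I where "I = moment m1 m2 m3 a1 a2 a3"
  have "inertia m1 m2 m3 a1 a2 a3 u v = lam * (u \<bullet> v)" for v
    using eigen by (simp add: inertia_eigen_def)
  from this[of "axis 1 1"] this[of "axis 2 1"]
  have "m1 * (a1 \<bullet> u) * cplx a1 + m2 * (a2 \<bullet> u) * cplx a2 + m3 * (a3 \<bullet> u) * cplx a3
          = (I - lam) * cplx u"
    by (simp add: inertia_eq complex_eq_iff cplx_def I_def inner_axis algebra_simps)
  then have S: "m1 * Re (cnj (cplx a1) * cplx u) * cplx a1 + m2 * Re (cnj (cplx a2) * cplx u) * cplx a2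
      + m3 * Re (cnj (cplx a3) * cplx u) * cplx a3 = (I - lam) * cplx u"
    by (simp only: inner_planar[OF planar(4)])
  have "quadratic_moment m1 m2 m3 a1 a2 a3 * cnj (cplx u)
      = 2 * (m1 * Re (cnj (cplx a1) * cplx u) * cplx a1 + m2 * Re (cnj (cplx a2) * cplx u) * cplx a2
             + m3 * Re (cnj (cplx a3) * cplx u) * cplx a3) - I * cplx u"
    unfolding I_def quadratic_moment_def moment_planar[OF planar(1-3)] cmod_power2
    by (simp add: complex_eq_iff power2_eq_square algebra_simps)
  then show ?thesis
    unfolding S by (simp add: I_def algebra_simps)
qed

lemma conj_eigen_sq:
  assumes "cmod \<zeta> = 1" "Q * cnj \<zeta> = of_real t * \<zeta>"
  shows "Q = of_real t * \<zeta>\<^sup>2"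
proof -
  have "Q = Q * (cnj \<zeta> * \<zeta>)"
    using assms(1) by (simp add: complex_norm_square[symmetric] mult.commute)
  also have "\<dots> = of_real t * \<zeta>\<^sup>2"
    using assms(2) by (simp add: power2_eq_square mult.assoc[symmetric])
  finally show ?thesis .
qed

lemma orthogonal_units_sq:
  assumes "cmod \<zeta>1 = 1" "cmod \<zeta>2 = 1" "Re (cnj \<zeta>1 * \<zeta>2) = 0"
  shows "\<zeta>2\<^sup>2 = - \<zeta>1\<^sup>2"
proof -
  define r where "r = cnj \<zeta>1 * \<zeta>2"
  have "\<zeta>2 = r * \<zeta>1"
    using assms(1) by (simp add: r_def complex_norm_square[symmetric] algebra_simps)
  moreover have "r\<^sup>2 = -1"
  proof -
    have "cmod r = 1" "Re r = 0" using assms by (simp_all add: r_def norm_mult)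
    then show ?thesis
      by (simp add: complex_eq_iff cmod_def power2_eq_square) (metis abs_mult_self_eq mult_1_left)
  qed
  ultimately show ?thesis by (simp add: power_mult_distrib)
qed

lemma conj_eigen_larger_sq:
  assumes unit: "cmod \<zeta>1 = 1" "cmod \<zeta>2 = 1" and orth: "Re (cnj \<zeta>1 * \<zeta>2) = 0"
    and eigen: "Q * cnj \<zeta>1 = of_real t1 * \<zeta>1" "Q * cnj \<zeta>2 = of_real t2 * \<zeta>2"
    and larger: "t2 \<le> t1"
  shows "Q = of_real (cmod Q) * \<zeta>1\<^sup>2"
proof -
  have Q1: "Q = of_real t1 * \<zeta>1\<^sup>2" by (rule conj_eigen_sq[OF unit(1) eigen(1)])
  have "Q = of_real (- t2) * \<zeta>1\<^sup>2"
    using conj_eigen_sq[OF unit(2) eigen(2)] orthogonal_units_sq[OF unit orth] by simp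
  with Q1 have "of_real t1 * \<zeta>1\<^sup>2 = of_real (- t2) * \<zeta>1\<^sup>2"
    by simp
  moreover have "\<zeta>1\<^sup>2 \<noteq> 0"
    using unit(1) by auto
  ultimately have "(of_real t1 :: complex) = of_real (- t2)"
    using mult_right_cancel by blast
  then have "t2 = - t1"
    by simp
  with larger have "t1 \<ge> 0" by simp
  then show ?thesis
    using Q1 unit(1) by (simp add: norm_mult norm_power)
qed

lemma inertia_min_axis:
  assumes planar: "a1 $ 3 = 0" "a2 $ 3 = 0" "a3 $ 3 = 0"
    and frame: "u1 $ 3 = 0" "u2 $ 3 = 0" "norm u1 = 1" "norm u2 = 1" "u1 \<bullet> u2 = 0"
    and eigen: "inertia_eigen m1 m2 m3 a1 a2 a3 lam1 u1" "inertia_eigen m1 m2 m3 a1 a2 a3 lam2 u2"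
    and smaller: "lam1 \<le> lam2"
  shows "quadratic_moment m1 m2 m3 a1 a2 a3
           = of_real (cmod (quadratic_moment m1 m2 m3 a1 a2 a3)) * (cplx u1)\<^sup>2"
    and "(cplx u2)\<^sup>2 = - (cplx u1)\<^sup>2"
proof -
  have unit: "cmod (cplx u1) = 1" "cmod (cplx u2) = 1" and orth: "Re (cnj (cplx u1) * cplx u2) = 0"
    using frame by (simp_all add: norm_planar inner_planar)
  show "(cplx u2)\<^sup>2 = - (cplx u1)\<^sup>2"
    by (rule orthogonal_units_sq[OF unit orth])
  show "quadratic_moment m1 m2 m3 a1 a2 a3
      = of_real (cmod (quadratic_moment m1 m2 m3 a1 a2 a3)) * (cplx u1)\<^sup>2"
    using conj_eigen_larger_sq[OF unit orth inertia_eigen_planar[OF planar frame(1) eigen(1)]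
        inertia_eigen_planar[OF planar frame(2) eigen(2)]] smaller by simp
qed

lemma cis_double_angles_to_axes:
  assumes "w \<noteq> 0" "Q \<noteq> 0" and axis: "Q = of_real (cmod Q) * \<zeta>1\<^sup>2" and perp: "\<zeta>2\<^sup>2 = - \<zeta>1\<^sup>2"
    and angle: "cis \<psi>1 = cnj w * \<zeta>1 / cmod w" "cis \<psi>2 = cnj w * \<zeta>2 / cmod w"
  shows "cis (2 * \<psi>1) = (Q / w\<^sup>2) / cmod (Q / w\<^sup>2)" and "cis (2 * \<psi>2) = - cis (2 * \<psi>1)"
proof -
  have double: "cis (2 * \<psi>1) = (cnj w)\<^sup>2 * \<zeta>1\<^sup>2 / (cmod w)\<^sup>2"
    "cis (2 * \<psi>2) = (cnj w)\<^sup>2 * \<zeta>2\<^sup>2 / (cmod w)\<^sup>2"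
    using Complex.DeMoivre[of \<psi>1 2] Complex.DeMoivre[of \<psi>2 2]
    by (simp_all add: angle power_mult_distrib power_divide)
  then show "cis (2 * \<psi>2) = - cis (2 * \<psi>1)"
    by (simp add: perp)
  have \<zeta>1: "\<zeta>1\<^sup>2 = Q / cmod Q"
    using axis assms(2) by (simp add: field_simps)
  have cnj_w: "cnj w = of_real ((cmod w)\<^sup>2) / w"
    using assms(1) complex_norm_square[of w] by (simp add: field_simps)
  show "cis (2 * \<psi>1) = (Q / w\<^sup>2) / cmod (Q / w\<^sup>2)"
    unfolding double \<zeta>1 cnj_w using assms(1,2)
    by (simp add: norm_divide norm_mult field_simps power2_eq_square)
qed

lemma cot_eq_minus_tan:
  assumes "cis (2 * x) = - cis (2 * y)"
  shows "cot x = - tan y"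
proof -
  have "cot x = sin (2 * x) / (1 - cos (2 * x))"
    by (cases "sin x = 0") (simp_all add: cot_def sin_double cos_double_sin power2_eq_square)
  also have "\<dots> = - (sin (2 * y) / (cos (2 * y) + 1))"
    using assms by (simp add: complex_eq_iff)
  finally show ?thesis by (simp add: tan_half)
qed

section \<open>Jacobi coordinates\<close>

lemma centered_bilinear_jacobi:
  fixes m1 m2 m3 :: "'a::field"
  assumes mass: "m1 + m2 + m3 = 1" "m1 \<noteq> 1"
    and centered: "m1 * z1 + m2 * z2 + m3 * z3 = 0" "m1 * y1 + m2 * y2 + m3 * y3 = 0"
  shows "m1 * (z1 * y1) + m2 * (z2 * y2) + m3 * (z3 * y3)
           = m2 * m3 / (1 - m1) * (z2 - z3) * (y2 - y3) + m1 / (1 - m1) * z1 * y1"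
proof -
  have z1: "m1 * z1 = - (m2 * z2 + m3 * z3)" and y1: "m1 * y1 = - (m2 * y2 + m3 * y3)"
    using centered by (simp_all add: add_eq_0_iff2 add.assoc)
  have m: "1 - m1 = m2 + m3"
    using mass(1) by (simp add: algebra_simps)
  have "(1 - m1) * (m1 * (z1 * y1) + m2 * (z2 * y2) + m3 * (z3 * y3))
      = (1 - m1) * (m1 * (z1 * y1)) + (m2 + m3) * (m2 * z2 * y2 + m3 * z3 * y3)"
    unfolding m by (simp add: algebra_simps)
  also have "\<dots> = m1 * (z1 * y1) - (m1 * z1) * (m1 * y1) + (m2 + m3) * (m2 * z2 * y2 + m3 * z3 * y3)"
    by (simp add: algebra_simps)
  also have "\<dots> = m2 * m3 * (z2 - z3) * (y2 - y3) + m1 * (z1 * y1)"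
    unfolding z1 y1 by (simp add: algebra_simps)
  finally have "m1 * (z1 * y1) + m2 * (z2 * y2) + m3 * (z3 * y3)
      = (m2 * m3 * (z2 - z3) * (y2 - y3) + m1 * (z1 * y1)) / (1 - m1)"
    using mass(2) by (simp add: eq_divide_eq mult.commute)
  then show ?thesis
    by (simp add: add_divide_distrib)
qed

lemma jacobi_bilinear:
  fixes z1 z2 z3 y1 y2 y3 :: complex
  assumes mass: "m1 > 0" "m2 > 0" "m3 > 0" "m1 + m2 + m3 = 1"
    and centered: "m1 * z1 + m2 * z2 + m3 * z3 = 0" "m1 * y1 + m2 * y2 + m3 * y3 = 0"
  shows "m1 * (z1 * y1) + m2 * (z2 * y2) + m3 * (z3 * y3)
     = (sqrt (m2 * m3 / (1 - m1)) * (z2 - z3)) * (sqrt (m2 * m3 / (1 - m1)) * (y2 - y3))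
     + (sqrt (m1 / (1 - m1)) * z1) * (sqrt (m1 / (1 - m1)) * y1)"
proof -
  have mass': "of_real m1 + of_real m2 + of_real m3 = (1::complex)" "of_real m1 \<noteq> (1::complex)"
    using mass by (metis of_real_1 of_real_add, simp)
  have sq: "of_real (sqrt x) * of_real (sqrt x) = (of_real x :: complex)" if "x \<ge> 0" for x
    using that by (simp flip: of_real_mult)
  have "m1 * (z1 * y1) + m2 * (z2 * y2) + m3 * (z3 * y3)
      = of_real (m2 * m3 / (1 - m1)) * (z2 - z3) * (y2 - y3) + of_real (m1 / (1 - m1)) * z1 * y1"
    unfolding of_real_divide of_real_mult of_real_diff of_real_1
    by (rule centered_bilinear_jacobi[OF mass' centered])
  also have "\<dots> = (of_real (sqrt (m2 * m3 / (1 - m1))) * of_real (sqrt (m2 * m3 / (1 - m1))))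
        * ((z2 - z3) * (y2 - y3))
      + (of_real (sqrt (m1 / (1 - m1))) * of_real (sqrt (m1 / (1 - m1)))) * (z1 * y1)"
    using mass by (simp add: sq mult.assoc)
  also have "\<dots> = (sqrt (m2 * m3 / (1 - m1)) * (z2 - z3)) * (sqrt (m2 * m3 / (1 - m1)) * (y2 - y3))
     + (sqrt (m1 / (1 - m1)) * z1) * (sqrt (m1 / (1 - m1)) * y1)"
    by (simp only: ac_simps)
  finally show ?thesis .
qed

lemma jacobi_quadratic_moment:
  assumes mass: "m1 > 0" "m2 > 0" "m3 > 0" "m1 + m2 + m3 = 1"
    and centered: "m1 *\<^sub>R a1 + m2 *\<^sub>R a2 + m3 *\<^sub>R a3 = 0"
  shows "quadratic_moment m1 m2 m3 a1 a2 a3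
           = (jac1 m1 m2 m3 a1 a2 a3)\<^sup>2 + (jac2 m1 m2 m3 a1 a2 a3)\<^sup>2"
  using jacobi_bilinear[OF mass cplx_centered[OF centered] cplx_centered[OF centered]]
  by (simp add: quadratic_moment_def jac1_def jac2_def power2_eq_square)

lemma jacobi_moment:
  assumes mass: "m1 > 0" "m2 > 0" "m3 > 0" "m1 + m2 + m3 = 1"
    and centered: "m1 *\<^sub>R a1 + m2 *\<^sub>R a2 + m3 *\<^sub>R a3 = 0"
    and planar: "a1 $ 3 = 0" "a2 $ 3 = 0" "a3 $ 3 = 0"
  shows "moment m1 m2 m3 a1 a2 a3
           = (cmod (jac1 m1 m2 m3 a1 a2 a3))\<^sup>2 + (cmod (jac2 m1 m2 m3 a1 a2 a3))\<^sup>2"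
proof -
  note c = cplx_centered[OF centered]
  have c': "m1 * cnj (cplx a1) + m2 * cnj (cplx a2) + m3 * cnj (cplx a3) = 0"
    using arg_cong[OF c, of cnj] by simp
  have "of_real (moment m1 m2 m3 a1 a2 a3)
      = m1 * (cplx a1 * cnj (cplx a1)) + m2 * (cplx a2 * cnj (cplx a2))
        + m3 * (cplx a3 * cnj (cplx a3))"
    by (simp add: moment_planar[OF planar] complex_norm_square mult.assoc flip: of_real_power)
  also have "\<dots> = jac1 m1 m2 m3 a1 a2 a3 * cnj (jac1 m1 m2 m3 a1 a2 a3)
      + jac2 m1 m2 m3 a1 a2 a3 * cnj (jac2 m1 m2 m3 a1 a2 a3)"
    using jacobi_bilinear[OF mass c c'] by (simp add: jac1_def jac2_def)
  also have "\<dots> = of_real ((cmod (jac1 m1 m2 m3 a1 a2 a3))\<^sup>2 + (cmod (jac2 m1 m2 m3 a1 a2 a3))\<^sup>2)"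
    by (simp only: of_real_add complex_norm_square)
  finally show ?thesis
    using of_real_eq_iff by blast
qed

lemma Im_jac1_cnj_jac2_pos:
  assumes mass: "m1 > 0" "m2 > 0" "m3 > 0" "m1 + m2 + m3 = 1"
    and centered: "m1 *\<^sub>R a1 + m2 *\<^sub>R a2 + m3 *\<^sub>R a3 = 0"
    and oriented: "Im (cnj (cplx a1) * cplx a2) > 0"
  shows "Im (jac1 m1 m2 m3 a1 a2 a3 * cnj (jac2 m1 m2 m3 a1 a2 a3)) > 0"
proof -
  define z1 z2 z3 where "z1 = cplx a1" and "z2 = cplx a2" and "z3 = cplx a3"
  have c: "m1 * z1 + m2 * z2 + m3 * z3 = 0"
    unfolding z1_def z2_def z3_def by (rule cplx_centered[OF centered])
  have x: "m3 * Re z3 = - (m1 * Re z1 + m2 * Re z2)"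
    and y: "m3 * Im z3 = - (m1 * Im z1 + m2 * Im z2)"
    using c by (simp_all add: complex_eq_iff add_eq_0_iff2 add.assoc)
  have "m3 * Im ((z2 - z3) * cnj z1)
      = m3 * Im (cnj z1 * z2) - Re z1 * (m3 * Im z3) + Im z1 * (m3 * Re z3)"
    by (simp add: algebra_simps)
  also have "\<dots> = (m2 + m3) * Im (cnj z1 * z2)"
    unfolding x y by (simp add: algebra_simps)
  also have "\<dots> > 0"
    using mult_pos_pos[OF add_pos_pos[OF mass(2,3)] oriented] unfolding z1_def z2_def .
  finally have "Im ((z2 - z3) * cnj z1) > 0"
    by (metis zero_less_mult_pos mass(3))
  then show ?thesis
    using mass by (simp add: jac1_def jac2_def z1_def z2_def z3_def)
qed

lemma north_pole_if_quadratic_moment_zero: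
  assumes mass: "m1 > 0" "m2 > 0" "m3 > 0" "m1 + m2 + m3 = 1"
    and centered: "m1 *\<^sub>R a1 + m2 *\<^sub>R a2 + m3 *\<^sub>R a3 = 0"
    and planar: "a1 $ 3 = 0" "a2 $ 3 = 0" "a3 $ 3 = 0"
    and Q: "quadratic_moment m1 m2 m3 a1 a2 a3 = 0"
  shows "m1 * (norm a1)\<^sup>2 = (1 - m1) / 2 * moment m1 m2 m3 a1 a2 a3"
proof -
  let ?w1 = "jac1 m1 m2 m3 a1 a2 a3" and ?w2 = "jac2 m1 m2 m3 a1 a2 a3"
  have "?w1\<^sup>2 = - ?w2\<^sup>2"
    using Q jacobi_quadratic_moment[OF mass centered] by (simp add: eq_neg_iff_add_eq_0)
  then have "(cmod ?w1)\<^sup>2 = (cmod ?w2)\<^sup>2"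
    by (metis norm_minus_cancel norm_power)
  then have "moment m1 m2 m3 a1 a2 a3 = 2 * (m1 / (1 - m1)) * (norm a1)\<^sup>2"
    using mass by (simp add: jacobi_moment[OF mass centered planar] jac2_def norm_mult
        norm_planar[OF planar(1)] power_mult_distrib)
  then show ?thesis
    using mass by (simp add: field_simps)
qed

lemma quadratic_moment_nonzero_off_north:
  assumes mass: "m1 > 0" "m2 > 0" "m3 > 0" "m1 + m2 + m3 = 1"
    and centered: "m1 *\<^sub>R a1 + m2 *\<^sub>R a2 + m3 *\<^sub>R a3 = 0"
    and planar: "a1 $ 3 = 0" "a2 $ 3 = 0" "a3 $ 3 = 0"
    and not_north: "\<not> (m1 * (norm a1)\<^sup>2 = (1 - m1) / 2 * moment m1 m2 m3 a1 a2 a3 \<and>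
                        m2 * (norm a2)\<^sup>2 = (1 - m2) / 2 * moment m1 m2 m3 a1 a2 a3 \<and>
                        m3 * (norm a3)\<^sup>2 = (1 - m3) / 2 * moment m1 m2 m3 a1 a2 a3)"
  shows "quadratic_moment m1 m2 m3 a1 a2 a3 \<noteq> 0"
proof
  assume Q: "quadratic_moment m1 m2 m3 a1 a2 a3 = 0"
  have rotate: "moment m2 m3 m1 a2 a3 a1 = moment m1 m2 m3 a1 a2 a3"
    "moment m3 m1 m2 a3 a1 a2 = moment m1 m2 m3 a1 a2 a3"
    "quadratic_moment m2 m3 m1 a2 a3 a1 = quadratic_moment m1 m2 m3 a1 a2 a3"
    "quadratic_moment m3 m1 m2 a3 a1 a2 = quadratic_moment m1 m2 m3 a1 a2 a3"
    by (simp_all add: moment_def quadratic_moment_def ac_simps)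
  have "m1 * (norm a1)\<^sup>2 = (1 - m1) / 2 * moment m1 m2 m3 a1 a2 a3"
    by (rule north_pole_if_quadratic_moment_zero[OF mass centered planar Q])
  moreover have "m2 * (norm a2)\<^sup>2 = (1 - m2) / 2 * moment m1 m2 m3 a1 a2 a3"
    using north_pole_if_quadratic_moment_zero[of m2 m3 m1 a2 a3 a1] mass centered planar Q
    by (simp add: rotate ac_simps)
  moreover have "m3 * (norm a3)\<^sup>2 = (1 - m3) / 2 * moment m1 m2 m3 a1 a2 a3"
    using north_pole_if_quadratic_moment_zero[of m3 m1 m2 a3 a1 a2] mass centered planar Q
    by (simp add: rotate ac_simps)
  ultimately show False
    using not_north by blast
qed

section \<open>Longitude and colatitude on the shape sphere\<close>

definition inverse_stereographic :: "complex \<Rightarrow> real^3" where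
  "inverse_stereographic \<omega> =
     vector [(1 - (cmod \<omega>)\<^sup>2) / (1 + (cmod \<omega>)\<^sup>2), - 2 * Re \<omega> / (1 + (cmod \<omega>)\<^sup>2),
             2 * Im \<omega> / (1 + (cmod \<omega>)\<^sup>2)]"

lemma inverse_stereographic_ratio:
  assumes "w2 \<noteq> 0"
  shows "vector [((cmod w2)\<^sup>2 - (cmod w1)\<^sup>2) / ((cmod w1)\<^sup>2 + (cmod w2)\<^sup>2),
                 - 2 * Re (w1 * cnj w2) / ((cmod w1)\<^sup>2 + (cmod w2)\<^sup>2),
                 2 * Im (w1 * cnj w2) / ((cmod w1)\<^sup>2 + (cmod w2)\<^sup>2)]
         = inverse_stereographic (w1 / w2)"
proof -
  define \<omega> where "\<omega> = w1 / w2"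
  have w1: "w1 = \<omega> * w2" using assms by (simp add: \<omega>_def)
  have "w1 * cnj w2 = \<omega> * of_real ((cmod w2)\<^sup>2)"
    by (simp only: w1 complex_norm_square mult.assoc)
  then have Re: "Re (w1 * cnj w2) = Re \<omega> * (cmod w2)\<^sup>2"
    and Im: "Im (w1 * cnj w2) = Im \<omega> * (cmod w2)\<^sup>2"
    by simp_all
  have "(cmod w1)\<^sup>2 + (cmod w2)\<^sup>2 = (1 + (cmod \<omega>)\<^sup>2) * (cmod w2)\<^sup>2"
    by (simp add: w1 norm_mult power_mult_distrib algebra_simps)
  moreover have "(cmod w2)\<^sup>2 - (cmod w1)\<^sup>2 = (1 - (cmod \<omega>)\<^sup>2) * (cmod w2)\<^sup>2"
    by (simp add: w1 norm_mult power_mult_distrib algebra_simps)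
  ultimately show ?thesis
    using assms unfolding inverse_stereographic_def Re Im \<omega>_def[symmetric] by simp
qed

lemma shape_point_stereographic:
  assumes "jac2 m1 m2 m3 a1 a2 a3 \<noteq> 0"
    and "moment m1 m2 m3 a1 a2 a3
           = (cmod (jac1 m1 m2 m3 a1 a2 a3))\<^sup>2 + (cmod (jac2 m1 m2 m3 a1 a2 a3))\<^sup>2"
  shows "shape_point m1 m2 m3 a1 a2 a3
           = inverse_stereographic (jac1 m1 m2 m3 a1 a2 a3 / jac2 m1 m2 m3 a1 a2 a3)"
  using inverse_stereographic_ratio[OF assms(1)] assms(2)
  by (simp add: shape_point_def Let_def cmod_power2)

lemma half_angle_identity:
  fixes p q N :: real
  assumes q: "q > 0" and N: "N > 0" and DN: "(1 + p\<^sup>2 + q\<^sup>2)\<^sup>2 - (2 * q)\<^sup>2 = N\<^sup>2"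
  shows "- 2 * p / (N + 1 - p\<^sup>2 - q\<^sup>2)
           = - ((1 + p\<^sup>2 + q\<^sup>2 + N) / (2 * q)) * (2 * p * q / (N + 1 + p\<^sup>2 - q\<^sup>2))"
proof -
  define D X Y where "D = 1 + p\<^sup>2 + q\<^sup>2" and "X = N + 1 - p\<^sup>2 - q\<^sup>2" and "Y = N + 1 + p\<^sup>2 - q\<^sup>2"
  have "D > 0" by (simp add: D_def add_pos_nonneg)
  have key: "(D + N) * X = 2 * Y"
    using DN by (simp add: X_def Y_def D_def power2_eq_square algebra_simps)
  have "- ((D + N) / (2 * q)) * (2 * p * q / Y) = - ((D + N) * p / Y)"
    using q by simp
  \<comment> \<open>\<open>X = 0\<close> forces \<open>Y = 0\<close>; both sides are then \<open>0\<close> by \<open>x / 0 = 0\<close> (the case \<open>\<theta> = \<pi>\<close>).\<close>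
  also have "\<dots> = - 2 * p / X"
  proof (cases "X = 0")
    case True
    with key show ?thesis by simp
  next
    case False
    have Y: "Y = (D + N) * (X / 2)"
      using key by simp
    have "D + N \<noteq> 0"
      using \<open>D > 0\<close> N by simp
    with False show ?thesis
      unfolding Y by simp
  qed
  finally show ?thesis
    unfolding D_def X_def Y_def by simp
qed

lemma tan_half_longitude:
  fixes \<omega> :: complex
  assumes upper: "Im \<omega> > 0" and not_pole: "1 + \<omega>\<^sup>2 \<noteq> 0" and colat: "sin \<phi> \<ge> 0"
    and sphere: "inverse_stereographic \<omega> = vector [sin \<phi> * cos \<theta>, sin \<phi> * sin \<theta>, cos \<phi>]"
    and axis: "cis (2 * \<psi>) = (1 + \<omega>\<^sup>2) / cmod (1 + \<omega>\<^sup>2)"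
  shows "tan (\<theta> / 2) = - ((1 + sin \<phi>) / cos \<phi>) * tan \<psi>"
proof -
  define p q where "p = Re \<omega>" and "q = Im \<omega>"
  define D N where "D = 1 + p\<^sup>2 + q\<^sup>2" and "N = cmod (1 + \<omega>\<^sup>2)"
  have D: "D > 0" by (simp add: D_def add_pos_nonneg)
  have N: "N > 0" using not_pole by (simp add: N_def)
  have q: "q > 0" using upper by (simp add: q_def)
  have N2: "N\<^sup>2 = (1 + p\<^sup>2 - q\<^sup>2)\<^sup>2 + (2 * p * q)\<^sup>2"
    unfolding N_def cmod_power2 by (simp add: p_def q_def power2_eq_square algebra_simps)
  have sphere': "sin \<phi> * cos \<theta> = (1 - p\<^sup>2 - q\<^sup>2) / D"
    "sin \<phi> * sin \<theta> = - 2 * p / D" "cos \<phi> = 2 * q / D"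
    using sphere[symmetric]
    by (simp_all add: inverse_stereographic_def vec_eq_iff forall_3 vector_3 cmod_power2
        p_def q_def D_def add.assoc diff_diff_eq)
  have axis': "cos (2 * \<psi>) = (1 + p\<^sup>2 - q\<^sup>2) / N" "sin (2 * \<psi>) = 2 * p * q / N"
    using axis by (simp_all add: complex_eq_iff N_def p_def q_def power2_eq_square)
  have DN: "D\<^sup>2 - (2 * q)\<^sup>2 = N\<^sup>2"
    unfolding N2 D_def by (simp add: power2_eq_square algebra_simps)
  have sin_phi: "sin \<phi> = N / D"
  proof -
    have "(sin \<phi>)\<^sup>2 = 1 - (2 * q / D)\<^sup>2"
      using sphere'(3) by (simp add: sin_squared_eq)
    also have "\<dots> = (N / D)\<^sup>2"
      using D by (simp add: DN[symmetric] field_simps)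
    finally show ?thesis
      using colat N D by (simp add: power2_eq_iff_nonneg)
  qed
  have "tan (\<theta> / 2) = (sin \<phi> * sin \<theta>) / (sin \<phi> * (cos \<theta> + 1))"
    using tan_half[of "\<theta> / 2"] sin_phi N D by simp
  also have "\<dots> = (- 2 * p / D) / ((N + 1 - p\<^sup>2 - q\<^sup>2) / D)"
    unfolding distrib_left sphere'
    by (simp add: sin_phi add_divide_distrib[symmetric] algebra_simps)
  also have "\<dots> = - 2 * p / (N + 1 - p\<^sup>2 - q\<^sup>2)"
    using D by simp
  finally have tan_theta: "tan (\<theta> / 2) = - 2 * p / (N + 1 - p\<^sup>2 - q\<^sup>2)" .
  have tan_psi: "tan \<psi> = 2 * p * q / (N + 1 + p\<^sup>2 - q\<^sup>2)"
    using tan_half[of \<psi>] N unfolding axis' by (simp add: field_simps)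
  have cot_phi: "(1 + sin \<phi>) / cos \<phi> = (D + N) / (2 * q)"
    using D q unfolding sin_phi sphere'(3) by (simp add: field_simps)
  show ?thesis
    unfolding tan_theta tan_psi cot_phi D_def using half_angle_identity[OF q N DN[unfolded D_def]] .
qed

theorem mainTheorem9:
  fixes m1 m2 m3 :: real and a1 a2 a3 u1 u2 :: "real^3"
    and lam1 lam2 \<psi>1 \<psi>2 \<phi> \<theta> :: real
  assumes masses: "m1 > 0" "m2 > 0" "m3 > 0" "m1 + m2 + m3 = 1"
    and mtri: "m1 *\<^sub>R a1 + m2 *\<^sub>R a2 + m3 *\<^sub>R a3 = 0"
    and plane: "a1 $ 3 = 0" "a2 $ 3 = 0" "a3 $ 3 = 0"
    and nondeg: "cross3 a1 a2 \<noteq> 0"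
    and posor: "(1 / norm (cross3 a1 a2)) *\<^sub>R (cross3 a1 a2) = kvec"
    and not_north: "\<not> (m1 * (norm a1)^2 = (1 - m1) / 2 * moment m1 m2 m3 a1 a2 a3 \<and>
                        m2 * (norm a2)^2 = (1 - m2) / 2 * moment m1 m2 m3 a1 a2 a3 \<and>
                        m3 * (norm a3)^2 = (1 - m3) / 2 * moment m1 m2 m3 a1 a2 a3)"
    and frame: "u1 $ 3 = 0" "u2 $ 3 = 0" "norm u1 = 1" "norm u2 = 1" "u1 \<bullet> u2 = 0"
    and eig1: "inertia_eigen m1 m2 m3 a1 a2 a3 lam1 u1"
    and eig2: "inertia_eigen m1 m2 m3 a1 a2 a3 lam2 u2"
    and smallest: "\<And>lam v. inertia_eigen m1 m2 m3 a1 a2 a3 lam v \<Longrightarrow> lam1 \<le> lam"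
    and ang1: "oriented_angle kvec a1 u1 \<psi>1"
    and ang2: "oriented_angle kvec a1 u2 \<psi>2"
    and coords: "shape_coords m1 m2 m3 a1 a2 a3 \<phi> \<theta>"
  shows "tan (\<theta> / 2) = - ((1 + sin \<phi>) / cos \<phi>) * tan \<psi>1 \<and>
         tan (\<theta> / 2) = ((1 + sin \<phi>) / cos \<phi>) * cot \<psi>2"
proof -
  let ?Q = "quadratic_moment m1 m2 m3 a1 a2 a3"
  let ?w1 = "jac1 m1 m2 m3 a1 a2 a3" and ?w2 = "jac2 m1 m2 m3 a1 a2 a3"
  define \<omega> where "\<omega> = ?w1 / ?w2"
  have upper: "Im (?w1 * cnj ?w2) > 0"
    using Im_jac1_cnj_jac2_pos[OF masses mtri positively_oriented_planar[OF nondeg posor]] .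
  then have w2: "?w2 \<noteq> 0" by auto
  have Q: "?Q \<noteq> 0"
    by (rule quadratic_moment_nonzero_off_north[OF masses mtri plane not_north])
  have "a1 \<noteq> 0"
    using nondeg by auto
  then have "cis \<psi>1 = cnj ?w2 * cplx u1 / cmod ?w2" "cis \<psi>2 = cnj ?w2 * cplx u2 / cmod ?w2"
    using oriented_angle_planar[OF plane(1) frame(1) _ frame(3) ang1]
      oriented_angle_planar[OF plane(1) frame(2) _ frame(4) ang2] masses
    by (simp_all add: jac2_def norm_mult)
  note double = cis_double_angles_to_axes[OF w2 Q
      inertia_min_axis[OF plane frame eig1 eig2 smallest[OF eig2]] this]
  have ratio: "?Q / ?w2\<^sup>2 = 1 + \<omega>\<^sup>2"
    unfolding jacobi_quadratic_moment[OF masses mtri] \<omega>_def using w2 by (simp add: field_simps)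
  have sphere: "inverse_stereographic \<omega> = vector [sin \<phi> * cos \<theta>, sin \<phi> * sin \<theta>, cos \<phi>]"
    using coords shape_point_stereographic[OF w2 jacobi_moment[OF masses mtri plane]]
    by (simp add: shape_coords_def \<omega>_def)
  have "Im \<omega> > 0" and "1 + \<omega>\<^sup>2 \<noteq> 0" and "sin \<phi> \<ge> 0"
    using upper ratio Q w2 coords
    by (auto simp: \<omega>_def Im_complex_div_gt_0 shape_coords_def sin_ge_zero)
  then have "tan (\<theta> / 2) = - ((1 + sin \<phi>) / cos \<phi>) * tan \<psi>1"
    using tan_half_longitude[OF _ _ _ sphere double(1)[unfolded ratio]] by blast
  then show ?thesis
    using cot_eq_minus_tan[OF double(2)] by simp
qed

end
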